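(* For every positive integer $k$, \[ \sum_{\lfloor k/2\rfloor<i+t\le k}B_{2t}\,2^{2t}\binom{2k+2}{2t,\;2i+1,\;2k-2t-2i+1}=(k+1)\left(2^{2k}-(-1)^k\binom{2k}{k}\right), \] where the sum ranges over all pairs of nonnegative integers $i,t$ with $\lfloor k/2\rfloor<i+t\le k$.
   Context: The Bernoulli numbers $B_m$ ($m\ge 0$) are defined by $\dfrac{x}{e^x-1}=\sum_{m=0}^\infty B_m\dfrac{x^m}{m!}$. The trinomial coefficient is $\binom{n}{r_1,r_2,r_3}=\dfrac{n!}{r_1!\,r_2!\,r_3!}$ for nonnegative integers $r_1+r_2+r_3=n$. *)

theory Defs
  imports Complex_Main "HOL-Computational_Algebra.Formal_Power_Series"
begin

definition bernoulli_num :: "nat \<Rightarrow> real" where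
  "bernoulli_num m = fact m * fps_nth (fps_X / (fps_exp 1 - 1)) m"

text \<open>Trinomial coefficient n!/(r1! r2! r3!) (used only with r1+r2+r3 = n).\<close>
definition trinomial :: "nat \<Rightarrow> nat \<Rightarrow> nat \<Rightarrow> nat \<Rightarrow> nat" where
  "trinomial n r1 r2 r3 = fact n div (fact r1 * fact r2 * fact r3)"

end

theory Submission
  imports Defs
begin

text \<open>Evaluating the generating function x/(e^x - 1) at 2x and multiplying by e^x - e^(-x)
  gives 2x e^(-x); comparing coefficients of x^(2n+1) yields
  \<open>\<Sum>\<^sub>t C(2n+1, 2t) 2^(2t) B(2t) = 2n + 1\<close>. Grouping the double sum along the diagonals
  i + t = n and factoring the trinomial coefficient as C(2k+2, 2n+1) C(2n+1, 2t) turns the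
  left-hand side into (2k+2) times the sum of C(2k+1, 2n) over \<lfloor>k/2\<rfloor> < n \<le> k, which Pascal's
  rule and the symmetry of row 2k evaluate.\<close>

definition bernoulli_fps :: "real fps" where
  "bernoulli_fps = fps_X / (fps_exp 1 - 1)"

lemma bernoulli_num_conv_fps_nth: "bernoulli_num m = fact m * fps_nth bernoulli_fps m"
  unfolding bernoulli_num_def bernoulli_fps_def ..

lemma bernoulli_fps_times_exp_minus_one: "bernoulli_fps * (fps_exp 1 - 1) = fps_X"
proof -
  have "fps_nth (fps_exp 1 - 1 :: real fps) 1 = 1" by simp
  then have "fps_exp 1 - 1 \<noteq> (0 :: real fps)" and "subdegree (fps_exp 1 - 1 :: real fps) = 1"
    by (auto intro: subdegreeI)
  then have "fps_exp 1 - 1 dvd (fps_X :: real fps)"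
    by (simp add: fps_dvd_iff)
  then show ?thesis
    unfolding bernoulli_fps_def by simp
qed

lemma bernoulli_fps_dilated_times_sinh:
  "(bernoulli_fps oo (fps_const 2 * fps_X)) * (fps_exp 1 - fps_exp (-1))
     = fps_const 2 * fps_X * fps_exp (-1)"
proof -
  let ?B2 = "bernoulli_fps oo (fps_const 2 * fps_X)"
  have dilated: "?B2 * (fps_exp 2 - 1) = fps_const 2 * fps_X"
    using arg_cong[OF bernoulli_fps_times_exp_minus_one, of "\<lambda>f. f oo (fps_const 2 * fps_X)"]
    by (simp add: fps_compose_mult_distrib fps_compose_sub_distrib)
  have inv: "fps_exp (-1) * fps_exp 1 = (1 :: real fps)"
    using fps_exp_add_mult[of "-1 :: real" 1] by simp
  have exp2: "fps_exp 2 = fps_exp 1 * (fps_exp 1 :: real fps)"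
    using fps_exp_add_mult[of "1 :: real" 1] by simp
  have "(?B2 * (fps_exp 1 - fps_exp (-1))) * fps_exp 1 = ?B2 * (fps_exp 2 - 1)"
    using exp2 inv by (simp add: algebra_simps)
  also have "\<dots> = (fps_const 2 * fps_X * fps_exp (-1)) * fps_exp 1"
    using dilated inv by (simp add: mult.assoc)
  finally have "(?B2 * (fps_exp 1 - fps_exp (-1))) * fps_exp 1
      = (fps_const 2 * fps_X * fps_exp (-1)) * fps_exp 1" .
  moreover have "fps_exp 1 \<noteq> (0 :: real fps)"
    by (auto simp: fps_eq_iff intro!: exI[of _ 0])
  ultimately show ?thesis
    using mult_right_cancel by blast
qed

lemma fact_times_fps_mult_nth:
  fixes f g :: "'a :: field_char_0 fps"
  shows "fact m * fps_nth (f * g) m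
           = (\<Sum>j\<le>m. of_nat (m choose j) * (fact j * fps_nth f j) * (fact (m - j) * fps_nth g (m - j)))"
  unfolding fps_mult_nth atLeast0AtMost sum_distrib_left
  by (intro sum.cong refl) (simp add: binomial_fact field_simps)

lemma sum_bernoulli_even_binomial:
  "(\<Sum>t\<le>n. 2 ^ (2 * t) * bernoulli_num (2 * t) * real ((2 * n + 1) choose (2 * t))) = 2 * n + 1"
proof -
  define N where "N = Suc (2 * n)"
  define g where "g j = real (N choose j) * 2 ^ j * bernoulli_num j * (1 - (-1) ^ (N - j))" for j
  have sinh_nth: "fact j * fps_nth (fps_exp 1 - fps_exp (-1)) j = (1 - (-1) ^ j :: real)" for j
    by (simp add: field_simps)
  have odd_terms: "g (Suc (2 * t)) = 0"
    and even_terms: "g (2 * t) = 2 * (2 ^ (2 * t) * bernoulli_num (2 * t) * real (N choose (2 * t)))"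
    if "t \<le> n" for t
  proof -
    from that have "N - Suc (2 * t) = 2 * (n - t)" and "N - 2 * t = Suc (2 * (n - t))"
      by (simp_all add: N_def)
    then show "g (Suc (2 * t)) = 0"
      and "g (2 * t) = 2 * (2 ^ (2 * t) * bernoulli_num (2 * t) * real (N choose (2 * t)))"
      by (simp_all add: g_def)
  qed
  have "fact N * fps_nth ((bernoulli_fps oo (fps_const 2 * fps_X)) * (fps_exp 1 - fps_exp (-1))) N
      = sum g {..N}"
    unfolding fact_times_fps_mult_nth fps_nth_compose_linear sinh_nth bernoulli_num_conv_fps_nth g_def
    by (simp add: algebra_simps)
  also have "\<dots> = (\<Sum>t\<le>n. g (2 * t) + g (Suc (2 * t)))"
    unfolding N_def by (rule sum.in_pairs_0)
  also have "\<dots> = 2 * (\<Sum>t\<le>n. 2 ^ (2 * t) * bernoulli_num (2 * t) * real (N choose (2 * t)))"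
    unfolding sum_distrib_left by (intro sum.cong refl) (simp add: odd_terms even_terms)
  finally have "2 * (\<Sum>t\<le>n. 2 ^ (2 * t) * bernoulli_num (2 * t) * real (N choose (2 * t)))
                  = fact N * fps_nth (fps_const 2 * fps_X * fps_exp (-1)) N"
    unfolding bernoulli_fps_dilated_times_sinh ..
  also have "\<dots> = 2 * N"
    by (simp add: N_def mult.assoc power_mult)
  finally show ?thesis
    by (simp add: N_def)
qed

lemma trinomial_eq_binomial_mult:
  "trinomial (a + b + c) a b c = ((a + b + c) choose (a + b)) * ((a + b) choose a)"
proof -
  have "fact (a + b) * fact c * ((a + b + c) choose (a + b)) = fact (a + b + c)"
    using binomial_fact_lemma[of "a + b" "a + b + c"] by simp
  moreover have "fact a * fact b * ((a + b) choose a) = fact (a + b)"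
    using binomial_fact_lemma[of a "a + b"] by simp
  ultimately have "fact (a + b + c)
      = fact a * fact b * fact c * (((a + b + c) choose (a + b)) * ((a + b) choose a))"
    by (metis mult.assoc mult.commute)
  then show ?thesis
    unfolding trinomial_def by simp
qed

lemma sum_bernoulli_trinomial_diagonal:
  assumes "n \<le> k"
  shows "(\<Sum>t\<le>n. bernoulli_num (2 * t) * 2 ^ (2 * t) *
            real (trinomial (2 * k + 2) (2 * t) (2 * (n - t) + 1) (2 * k - 2 * t - 2 * (n - t) + 1)))
         = real ((2 * k + 2) * ((2 * k + 1) choose (2 * n)))"
proof -
  have trinomial_split: "trinomial (2 * k + 2) (2 * t) (2 * (n - t) + 1) (2 * k - 2 * t - 2 * (n - t) + 1)
      = ((2 * k + 2) choose (2 * n + 1)) * ((2 * n + 1) choose (2 * t))" if "t \<le> n" for t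
  proof -
    from that assms have "2 * k + 2 = 2 * t + (2 * (n - t) + 1) + (2 * k - 2 * t - 2 * (n - t) + 1)"
      and "2 * t + (2 * (n - t) + 1) = 2 * n + 1"
      by simp_all
    then show ?thesis
      using trinomial_eq_binomial_mult[of "2 * t" "2 * (n - t) + 1" "2 * k - 2 * t - 2 * (n - t) + 1"]
      by simp
  qed
  have "(\<Sum>t\<le>n. bernoulli_num (2 * t) * 2 ^ (2 * t) *
            real (trinomial (2 * k + 2) (2 * t) (2 * (n - t) + 1) (2 * k - 2 * t - 2 * (n - t) + 1)))
        = real ((2 * k + 2) choose (2 * n + 1)) *
          (\<Sum>t\<le>n. 2 ^ (2 * t) * bernoulli_num (2 * t) * real ((2 * n + 1) choose (2 * t)))"
    unfolding sum_distrib_left by (intro sum.cong refl) (subst trinomial_split; simp)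
  also have "\<dots> = real ((2 * n + 1) * ((2 * k + 2) choose (2 * n + 1)))"
    unfolding sum_bernoulli_even_binomial by (simp add: algebra_simps)
  also have "\<dots> = real ((2 * k + 2) * ((2 * k + 1) choose (2 * n)))"
    using Suc_times_binomial[of "2 * n" "2 * k + 1"]
    by (simp only: Suc_eq_plus1 add.assoc one_add_one)
  finally show ?thesis .
qed

lemma sum_greaterThanAtMost_in_pairs:
  fixes f :: "nat \<Rightarrow> 'a :: comm_monoid_add"
  shows "(\<Sum>n\<in>{a<..b}. f (2 * n - 1) + f (2 * n)) = (\<Sum>m\<in>{2 * a<..2 * b}. f m)"
proof (induction b)
  case 0
  then show ?case by simp
next
  case (Suc b)
  show ?case
  proof (cases "a \<le> b")
    case True
    then have "{a<..Suc b} = insert (Suc b) {a<..b}"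
      and "{2 * a<..2 * Suc b} = insert (2 * b + 2) (insert (2 * b + 1) {2 * a<..2 * b})"
      by auto
    then show ?thesis
      using Suc by (simp add: add_ac)
  next
    case False
    then show ?thesis by simp
  qed
qed

lemma sum_binomial_upper_half:
  "2 * (\<Sum>m\<in>{k<..2 * k}. (2 * k) choose m) + ((2 * k) choose k) = 4 ^ k"
proof -
  have "(\<Sum>m<k. (2 * k) choose m) = (\<Sum>m\<in>{k<..2 * k}. (2 * k) choose m)"
    by (rule sum.reindex_bij_witness[of _ "\<lambda>m. 2 * k - m" "\<lambda>m. 2 * k - m"])
       (auto simp: binomial_symmetric[symmetric] intro: binomial_symmetric)
  moreover have "{..2 * k} = {..<k} \<union> ({k} \<union> {k<..2 * k})"
    by auto
  then have "(\<Sum>m\<le>2 * k. (2 * k) choose m)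
      = (\<Sum>m<k. (2 * k) choose m) + ((2 * k) choose k) + (\<Sum>m\<in>{k<..2 * k}. (2 * k) choose m)"
    by (simp, subst sum.union_disjoint) auto
  ultimately show ?thesis
    using choose_row_sum[of "2 * k"] by (simp add: power_mult)
qed

lemma sum_binomial_even_upper:
  "2 * real (\<Sum>n\<in>{k div 2<..k}. (2 * k + 1) choose (2 * n))
     = 4 ^ k - (-1) ^ k * real ((2 * k) choose k)"
proof -
  have "(\<Sum>n\<in>{k div 2<..k}. (2 * k + 1) choose (2 * n))
      = (\<Sum>n\<in>{k div 2<..k}. ((2 * k) choose (2 * n - 1)) + ((2 * k) choose (2 * n)))"
  proof (intro sum.cong refl)
    fix n
    assume "n \<in> {k div 2<..k}"
    then have "2 * n = Suc (2 * n - 1)" by simp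
    then show "(2 * k + 1) choose (2 * n) = ((2 * k) choose (2 * n - 1)) + ((2 * k) choose (2 * n))"
      by (metis Suc_eq_plus1 binomial_Suc_Suc)
  qed
  also have "\<dots> = (\<Sum>m\<in>{2 * (k div 2)<..2 * k}. (2 * k) choose m)"
    by (rule sum_greaterThanAtMost_in_pairs)
  finally have pascal: "(\<Sum>n\<in>{k div 2<..k}. (2 * k + 1) choose (2 * n))
      = (\<Sum>m\<in>{2 * (k div 2)<..2 * k}. (2 * k) choose m)" .
  have half: "2 * real (\<Sum>m\<in>{k<..2 * k}. (2 * k) choose m) + real ((2 * k) choose k) = 4 ^ k"
    using arg_cong[OF sum_binomial_upper_half[of k], of real] by simp
  show ?thesis
  proof (cases "even k")
    case True
    then show ?thesis
      using pascal half by simp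
  next
    case False
    then have "{2 * (k div 2)<..2 * k} = insert k {k<..2 * k}"
      by (auto simp: odd_two_times_div_two_nat odd_pos)
    then show ?thesis
      using pascal half False by simp
  qed
qed

theorem mainTheorem4:
  fixes k :: nat
  assumes "k > 0"
  shows "(\<Sum>(i, t) \<in> {(i, t). k div 2 < i + t \<and> i + t \<le> k}.
            bernoulli_num (2 * t) * 2 ^ (2 * t) *
            real (trinomial (2 * k + 2) (2 * t) (2 * i + 1) (2 * k - 2 * t - 2 * i + 1)))
         = real (k + 1) * (2 ^ (2 * k) - (-1) ^ k * real (2 * k choose k))"
proof -
  define F where "F i t = bernoulli_num (2 * t) * 2 ^ (2 * t) *
      real (trinomial (2 * k + 2) (2 * t) (2 * i + 1) (2 * k - 2 * t - 2 * i + 1))" for i t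
  have "(\<Sum>(i, t) \<in> {(i, t). k div 2 < i + t \<and> i + t \<le> k}. F i t)
      = (\<Sum>(n, t) \<in> (SIGMA n:{k div 2<..k}. {..n}). F (n - t) t)"
    by (rule sum.reindex_bij_witness[of _ "\<lambda>(n, t). (n - t, t)" "\<lambda>(i, t). (i + t, t)"]) auto
  also have "\<dots> = (\<Sum>n\<in>{k div 2<..k}. \<Sum>t\<le>n. F (n - t) t)"
    by (rule sum.Sigma[symmetric]) auto
  also have "\<dots> = (\<Sum>n\<in>{k div 2<..k}. real ((2 * k + 2) * ((2 * k + 1) choose (2 * n))))"
    unfolding F_def by (intro sum.cong refl sum_bernoulli_trinomial_diagonal) auto
  also have "\<dots> = real (k + 1) * (2 * real (\<Sum>n\<in>{k div 2<..k}. (2 * k + 1) choose (2 * n)))"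
    unfolding of_nat_sum sum_distrib_left by (intro sum.cong refl) (simp add: algebra_simps)
  also have "\<dots> = real (k + 1) * (2 ^ (2 * k) - (-1) ^ k * real (2 * k choose k))"
    unfolding sum_binomial_even_upper by (simp add: power_mult)
  finally show ?thesis
    by (simp add: F_def)
qed

end
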